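(* Fix any input (any fixed initial content of the tape). The set of programs whose computation on this input falls off the tape before reaching the halt state and before repeating a state has asymptotic probability one.
   Context: Model of computation: a single head reads and writes symbols $0,1$ on a one-way infinite tape with cells indexed $0,1,2,\dots$; the head starts on cell $0$. An $n$-state program has states $Q=\{q_1,\dots,q_n\}$, with $q_1$ the start state, plus a separate halt state not in $Q$. A program is a function $p: Q\times\{0,1\}\to (Q\cup\{\mathrm{halt}\})\times\{0,1\}\times\{L,R\}$; $p(q,i)=\langle r,j,d\rangle$ means: in state $q$ reading $i$, write $j$, move one cell in direction $d$, enter state $r$. The computation stops when the halt state is reached ("halting") or when the head attempts to move left from cell $0$ ("falls off the tape"); in the latter case the target state of that transition is not regarded as reached. The computation "repeats a state" if some state occurs twice in the sequence of states $q_1=s_0,s_1,\dots$ reached at successive steps. Let $P_n$ be the set of all $n$-state programs; the asymptotic probability of a set $B$ of programs is $\mu(B)=\lim_{n\to\infty}|B\cap P_n|/|P_n|$, when this limit exists. *)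

theory Defs
  imports Complex_Main "HOL-Library.FuncSet"
begin

(* Tape symbols 0,1 are encoded as False,True.
   States q_1,...,q_n are encoded as 0,...,n-1 (q_1 = 0 is the start state);
   a transition target is "Some r" for state r, or "None" for the halt state. *)

datatype dir = L | R

type_synonym program = "nat \<times> bool \<Rightarrow> nat option \<times> bool \<times> dir"

(* configuration: (current state, tape content, head position) *)
type_synonym config = "nat \<times> (nat \<Rightarrow> bool) \<times> nat"

definition programs :: "nat \<Rightarrow> program set" where
  "programs n = ({0..<n} \<times> (UNIV :: bool set)) \<rightarrow>\<^sub>E
                  ((insert None (Some ` {0..<n})) \<times> (UNIV :: bool set) \<times> (UNIV :: dir set))"

fun trans_of :: "program \<Rightarrow> config \<Rightarrow> nat option \<times> bool \<times> dir" where
  "trans_of p (q, t, h) = p (q, t h)"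

fun falls_off :: "program \<Rightarrow> config \<Rightarrow> bool" where
  "falls_off p (q, t, h) = (h = 0 \<and> snd (snd (p (q, t h))) = L)"

fun step :: "program \<Rightarrow> config \<Rightarrow> config" where
  "step p (q, t, h) =
     (case p (q, t h) of (r, j, d) \<Rightarrow>
        (the r, t(h := j), (if d = R then Suc h else h - 1)))"

definition conf :: "program \<Rightarrow> (nat \<Rightarrow> bool) \<Rightarrow> nat \<Rightarrow> config" where
  "conf p x i = (step p ^^ i) (0, x, 0)"

definition falls_off_before_halt_or_repeat :: "program \<Rightarrow> (nat \<Rightarrow> bool) \<Rightarrow> bool" where
  "falls_off_before_halt_or_repeat p x \<longleftrightarrow>
     (\<exists>k. (\<forall>i<k. \<not> falls_off p (conf p x i) \<and> fst (trans_of p (conf p x i)) \<noteq> None)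
        \<and> falls_off p (conf p x k)
        \<and> inj_on (\<lambda>i. fst (conf p x i)) {..k})"

end

theory Submission
  imports Defs
begin

text \<open>
  Until it repeats a state, a computation reads every transition p(q, t h) at a state q that
  has not been visited before, so for a uniformly random program these transitions are
  independent and uniform. Hence the head performs a fair random walk on the cells, and as long
  as at most m states have been visited, the next state is new with probability at least
  (n - m) / (n + 1). The probability of falling off within m steps before halting or repeating
  is therefore at least ((n - m) / (n + 1))^m times the probability that a simple random walk
  started at cell 0 steps below 0 within m steps. For fixed m the first factor tends to 1 as
  n grows, and the second tends to 1 as m grows, by recurrence of the simple random walk.
\<close>

lemma card_PiE_fiber:
  assumes "k \<in> I" "b \<in> B k" "\<And>f c. P (f(k := c)) = P f"
  shows "card (B k) * card {f \<in> Pi\<^sub>E I B. f k = b \<and> P f} = card {f \<in> Pi\<^sub>E I B. P f}"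
proof -
  have "bij_betw (\<lambda>(c, f). f(k := c)) (B k \<times> {f \<in> Pi\<^sub>E I B. f k = b \<and> P f}) {f \<in> Pi\<^sub>E I B. P f}"
    by (rule bij_betwI[where g = "\<lambda>f. (f k, f(k := b))"])
       (use assms in \<open>auto simp: PiE_iff extensional_def\<close>)
  then show ?thesis
    by (simp add: bij_betw_same_card flip: card_cartesian_product)
qed

lemma UNIV_dir: "(UNIV :: dir set) = {L, R}"
  using dir.exhaust by auto

definition targets :: "nat \<Rightarrow> nat option set" where
  "targets n = insert None (Some ` {0..<n})"

definition actions :: "nat \<Rightarrow> (nat option \<times> bool \<times> dir) set" where
  "actions n = targets n \<times> UNIV \<times> UNIV"

lemma finite_targets: "finite (targets n)"
  by (simp add: targets_def)

lemma card_targets: "card (targets n) = n + 1"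
  by (simp add: targets_def card_image)

lemma finite_actions: "finite (actions n)"
  by (simp add: actions_def finite_targets UNIV_dir)

lemma card_actions: "card (actions n) = 4 * (n + 1)"
  by (simp add: actions_def card_cartesian_product card_targets UNIV_dir)

lemma programs_eq_PiE: "programs n = Pi\<^sub>E ({0..<n} \<times> UNIV) (\<lambda>_. actions n)"
  by (simp add: programs_def actions_def targets_def)

lemma finite_programs: "finite (programs n)"
  by (simp add: programs_eq_PiE finite_actions finite_PiE)

lemma card_programs_pos: "0 < card (programs n)"
  using finite_programs by (simp add: card_gt_0_iff programs_eq_PiE PiE_eq_empty_iff actions_def targets_def)

definition uniform_prob :: "nat \<Rightarrow> (program \<Rightarrow> bool) \<Rightarrow> real" where
  "uniform_prob n P = real (card {p \<in> programs n. P p}) / real (card (programs n))"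

lemma uniform_prob_True: "uniform_prob n (\<lambda>_. True) = 1"
  using card_programs_pos[of n] by (simp add: uniform_prob_def)

lemma uniform_prob_False: "uniform_prob n (\<lambda>_. False) = 0"
  by (simp add: uniform_prob_def)

lemma uniform_prob_nonneg: "0 \<le> uniform_prob n P"
  by (simp add: uniform_prob_def)

lemma uniform_prob_mono:
  assumes "\<And>p. p \<in> programs n \<Longrightarrow> P p \<Longrightarrow> Q p"
  shows "uniform_prob n P \<le> uniform_prob n Q"
  unfolding uniform_prob_def using assms finite_programs
  by (intro divide_right_mono of_nat_mono card_mono) auto

lemma uniform_prob_le_1: "uniform_prob n P \<le> 1"
  using uniform_prob_mono[of n P "\<lambda>_. True"] by (simp add: uniform_prob_True)

lemma uniform_prob_sum_fibers:
  assumes "k \<in> {0..<n} \<times> UNIV"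
  shows "uniform_prob n P = (\<Sum>b\<in>actions n. uniform_prob n (\<lambda>p. p k = b \<and> P p))"
proof -
  have "(\<lambda>p. p k) ` {p \<in> programs n. P p} \<subseteq> actions n"
    using assms by (auto simp: programs_eq_PiE)
  then have "card {p \<in> programs n. P p} = (\<Sum>b\<in>actions n. card {p \<in> {p \<in> programs n. P p}. p k = b})"
    using sum.group[of "{p \<in> programs n. P p}" "actions n" "\<lambda>p. p k" "\<lambda>_. 1::nat"]
    by (simp add: finite_programs finite_actions)
  also have "\<dots> = (\<Sum>b\<in>actions n. card {p \<in> programs n. p k = b \<and> P p})"
    by (intro sum.cong arg_cong[where f = card]) auto
  finally show ?thesis
    by (simp add: uniform_prob_def flip: sum_divide_distrib)
qed

lemma uniform_prob_fiber:
  assumes "k \<in> {0..<n} \<times> UNIV" "b \<in> actions n" "\<And>p c. P (p(k := c)) = P p"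
  shows "uniform_prob n (\<lambda>p. p k = b \<and> P p) = uniform_prob n P / (4 * (real n + 1))"
proof -
  have "card {p \<in> programs n. P p} = 4 * (n + 1) * card {p \<in> programs n. p k = b \<and> P p}"
    using card_PiE_fiber[of k "{0..<n} \<times> UNIV" b "\<lambda>_. actions n" P] assms
    unfolding programs_eq_PiE card_actions by simp
  then have "real (card {p \<in> programs n. P p}) = 4 * (real n + 1) * card {p \<in> programs n. p k = b \<and> P p}"
    by (simp add: algebra_simps)
  moreover have "4 * (real n + 1) \<noteq> 0"
    by simp
  ultimately show ?thesis
    by (simp add: uniform_prob_def)
qed

definition move :: "nat \<Rightarrow> dir \<Rightarrow> nat" where
  "move h d = (if d = R then Suc h else h - 1)"

text \<open>
  The probability that a fair random walk started at cell h falls off cell 0 within m steps,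
  when each move that stays on the tape survives only with probability a.
\<close>

fun fall_prob :: "real \<Rightarrow> nat \<Rightarrow> nat \<Rightarrow> real" where
  "fall_prob a 0 h = 0"
| "fall_prob a (Suc m) h =
     (\<Sum>d\<in>{L, R}. if h = 0 \<and> d = L then 1 else a * fall_prob a m (move h d)) / 2"

declare fall_prob.simps(2) [simp del]

lemma fall_prob_nonneg: "0 \<le> a \<Longrightarrow> 0 \<le> fall_prob a m h"
  by (induction m arbitrary: h) (auto simp: fall_prob.simps(2) intro!: sum_nonneg)

lemma fall_prob_le_1: "0 \<le> a \<Longrightarrow> a \<le> 1 \<Longrightarrow> fall_prob a m h \<le> 1"
proof (induction m arbitrary: h)
  case (Suc m)
  have "(if h = 0 \<and> d = L then 1 else a * fall_prob a m (move h d)) \<le> 1" for d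
    using Suc mult_le_one[OF \<open>a \<le> 1\<close> fall_prob_nonneg] by auto
  from this[of L] this[of R] show ?case
    by (simp add: fall_prob.simps(2))
qed simp

lemma fall_prob_mono: "0 \<le> a \<Longrightarrow> fall_prob a m h \<le> fall_prob a (Suc m) h"
proof (induction m arbitrary: h)
  case 0
  then show ?case
    using fall_prob_nonneg[of a "Suc 0" h] by simp
next
  case (Suc m)
  then have "(\<Sum>d\<in>{L, R}. if h = 0 \<and> d = L then 1 else a * fall_prob a m (move h d))
      \<le> (\<Sum>d\<in>{L, R}. if h = 0 \<and> d = L then 1 else a * fall_prob a (Suc m) (move h d))"
    by (intro sum_mono) (auto intro: mult_left_mono)
  then show ?case
    by (simp add: fall_prob.simps(2))
qed

lemma fall_prob_power_le:
  assumes "0 \<le> a" "a \<le> 1"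
  shows "a ^ m * fall_prob 1 m h \<le> fall_prob a m h"
proof (induction m arbitrary: h)
  case (Suc m)
  have "a ^ Suc m \<le> 1"
    by (rule power_le_one[OF assms])
  moreover have "a * (a ^ m * fall_prob 1 m h') \<le> a * fall_prob a m h'" for h'
    using Suc assms(1) by (rule mult_left_mono)
  ultimately have "(\<Sum>d\<in>{L, R}. a ^ Suc m * (if h = 0 \<and> d = L then 1 else fall_prob 1 m (move h d)))
      \<le> (\<Sum>d\<in>{L, R}. if h = 0 \<and> d = L then 1 else a * fall_prob a m (move h d))"
    by (intro sum_mono) (simp add: mult.assoc)
  then show ?case
    unfolding fall_prob.simps(2) mult_1 times_divide_eq_right sum_distrib_left
    by (rule divide_right_mono) simp
qed simp

lemma half_line_harmonic_eq_1:
  fixes g :: "nat \<Rightarrow> real"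
  assumes "g 0 = (1 + g 1) / 2" "\<And>h. g (Suc h) = (g h + g (Suc (Suc h))) / 2"
    and "\<And>h. 0 \<le> g h" "g 0 \<le> 1"
  shows "g 0 = 1"
proof (rule ccontr)
  define c where "c = 1 - g 0"
  have linear: "g h = g 0 - real h * c \<and> g (Suc h) = g 0 - real h * c - c" for h
  proof (induction h)
    case (Suc h)
    then show ?case
      using assms(2)[of h] by (simp add: distrib_right)
  qed (use assms(1) c_def in simp)
  assume "g 0 \<noteq> 1"
  then have "0 < c"
    using assms(4) c_def by simp
  then obtain h where "g 0 < real h * c"
    using reals_Archimedean3 by blast
  then show False
    using linear[of h] assms(3)[of h] by simp
qed

lemma fall_prob_1_tendsto_1: "(\<lambda>m. fall_prob 1 m 0) \<longlonglongrightarrow> 1"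
proof -
  have "\<exists>l. (\<lambda>m. fall_prob 1 m h) \<longlonglongrightarrow> l" for h
    using incseq_convergent[of "\<lambda>m. fall_prob 1 m h" 1]
    by (metis fall_prob_le_1 fall_prob_mono incseq_SucI zero_le_one order_refl)
  then obtain g where g: "\<And>h. (\<lambda>m. fall_prob 1 m h) \<longlonglongrightarrow> g h"
    by metis
  have harmonic: "g h = (\<Sum>d\<in>{L, R}. if h = 0 \<and> d = L then 1 else g (move h d)) / 2" for h
  proof (rule LIMSEQ_unique)
    show "(\<lambda>m. fall_prob 1 (Suc m) h) \<longlonglongrightarrow> g h"
      using g by (rule LIMSEQ_Suc)
    have terms: "(\<lambda>m. if h = 0 \<and> d = L then 1 else fall_prob 1 m (move h d))
        \<longlonglongrightarrow> (if h = 0 \<and> d = L then 1 else g (move h d))" for d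
      using g by simp
    show "(\<lambda>m. fall_prob 1 (Suc m) h)
        \<longlonglongrightarrow> (\<Sum>d\<in>{L, R}. if h = 0 \<and> d = L then 1 else g (move h d)) / 2"
      unfolding fall_prob.simps(2) mult_1 by (intro tendsto_divide tendsto_sum terms tendsto_const) simp
  qed
  have "g 0 = 1"
  proof (rule half_line_harmonic_eq_1)
    show "g 0 = (1 + g 1) / 2" "g (Suc h) = (g h + g (Suc (Suc h))) / 2" for h
      using harmonic[of 0] harmonic[of "Suc h"] by (simp_all add: move_def)
    show "0 \<le> g h" for h
      using g by (rule tendsto_lowerbound) (simp_all add: fall_prob_nonneg)
    show "g 0 \<le> 1"
      using g by (rule tendsto_upperbound) (simp_all add: fall_prob_le_1)
  qed
  then show ?thesis
    using g[of 0] by simp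
qed

text \<open>
  V holds the states visited before the current one; every state entered must be new.
\<close>

fun falls_off_fresh :: "program \<Rightarrow> nat \<Rightarrow> nat set \<Rightarrow> config \<Rightarrow> bool" where
  "falls_off_fresh p 0 V c = False"
| "falls_off_fresh p (Suc m) V (q, t, h) =
     (case p (q, t h) of (r, j, d) \<Rightarrow>
        h = 0 \<and> d = L \<or>
        (case r of
           None \<Rightarrow> False
         | Some r' \<Rightarrow> r' \<notin> insert q V \<and> falls_off_fresh p m (insert q V) (r', t(h := j), move h d)))"

lemma falls_off_fresh_cong:
  assumes "q \<notin> V" "\<And>s b. s \<notin> V \<Longrightarrow> p (s, b) = p' (s, b)"
  shows "falls_off_fresh p m V (q, t, h) = falls_off_fresh p' m V (q, t, h)"
  using assms
proof (induction m arbitrary: V q t h)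
  case (Suc m)
  have "falls_off_fresh p m (insert q V) (r', t', h') = falls_off_fresh p' m (insert q V) (r', t', h')"
    if "r' \<notin> insert q V" for r' t' h'
    using that Suc.prems by (intro Suc.IH) auto
  moreover have "p (q, t h) = p' (q, t h)"
    using Suc.prems by simp
  ultimately show ?case
    by (auto split: prod.split option.split)
qed simp

lemma falls_off_fresh_conf_imp_falls_off_before_halt_or_repeat:
  assumes "falls_off_fresh p m ((\<lambda>j. fst (conf p x j)) ` {..<i}) (conf p x i)"
    and "\<forall>j<i. \<not> falls_off p (conf p x j) \<and> fst (trans_of p (conf p x j)) \<noteq> None"
    and "inj_on (\<lambda>j. fst (conf p x j)) {..i}"
  shows "falls_off_before_halt_or_repeat p x"
  using assms
proof (induction m arbitrary: i)
  case (Suc m)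
  obtain q t h where c: "conf p x i = (q, t, h)"
    by (cases "conf p x i")
  obtain r j d where a: "p (q, t h) = (r, j, d)"
    by (cases "p (q, t h)")
  let ?V = "(\<lambda>j. fst (conf p x j)) ` {..<i}"
  show ?case
  proof (cases "h = 0 \<and> d = L")
    case True
    then have "falls_off p (conf p x i)"
      using c a by simp
    then show ?thesis
      using Suc.prems(2,3) unfolding falls_off_before_halt_or_repeat_def by blast
  next
    case False
    then obtain r' where r': "r = Some r'" "r' \<notin> insert q ?V"
      and fresh: "falls_off_fresh p m (insert q ?V) (r', t(h := j), move h d)"
      using Suc.prems(1) by (auto simp: c a split: option.splits)
    have next_conf: "conf p x (Suc i) = (r', t(h := j), move h d)"
      using c a r' by (simp add: conf_def move_def)
    have visited: "insert q ?V = (\<lambda>j. fst (conf p x j)) ` {..<Suc i}"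
      using c by (auto simp: lessThan_Suc)
    show ?thesis
    proof (rule Suc.IH[of "Suc i"])
      show "falls_off_fresh p m ((\<lambda>j. fst (conf p x j)) ` {..<Suc i}) (conf p x (Suc i))"
        using fresh by (simp only: next_conf visited)
      show "\<forall>j<Suc i. \<not> falls_off p (conf p x j) \<and> fst (trans_of p (conf p x j)) \<noteq> None"
        using Suc.prems(2) False c a r' by (auto simp: less_Suc_eq)
      have "fst (conf p x (Suc i)) \<notin> (\<lambda>j. fst (conf p x j)) ` {..i}"
        using r'(2) next_conf visited by (simp add: lessThan_Suc_atMost)
      then show "inj_on (\<lambda>j. fst (conf p x j)) {..Suc i}"
        using Suc.prems(3) by (simp add: atMost_Suc)
    qed
  qed
qed simp

lemma fall_prob_Suc_le_sum_actions:
  assumes "0 \<le> a" "W \<subseteq> {0..<n}" "a * (real n + 1) \<le> real (card W)"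
  shows "4 * (real n + 1) * fall_prob a (Suc m) h
    \<le> (\<Sum>(r, j, d)\<in>actions n.
          if h = 0 \<and> d = L then 1 else if r \<in> Some ` W then fall_prob a m (move h d) else 0)"
    (is "_ \<le> (\<Sum>(r, j, d)\<in>_. ?c r d)")
proof -
  have per_dir: "(real n + 1) * (if h = 0 \<and> d = L then 1 else a * fall_prob a m (move h d))
      \<le> (\<Sum>r\<in>targets n. ?c r d)" for d
  proof (cases "h = 0 \<and> d = L")
    case False
    have fresh_targets: "targets n \<inter> {r. r \<in> Some ` W} = Some ` W"
      using assms(2) by (auto simp: targets_def)
    have "(real n + 1) * (if h = 0 \<and> d = L then 1 else a * fall_prob a m (move h d))
        = a * (real n + 1) * fall_prob a m (move h d)"
      unfolding if_not_P[OF False] by (simp add: mult_ac)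
    also have "\<dots> \<le> real (card W) * fall_prob a m (move h d)"
      using assms(3) fall_prob_nonneg[OF assms(1)] by (rule mult_right_mono)
    also have "\<dots> = (\<Sum>r\<in>targets n. if r \<in> Some ` W then fall_prob a m (move h d) else 0)"
      using fresh_targets by (simp add: sum.If_cases finite_targets card_image)
    also have "\<dots> = (\<Sum>r\<in>targets n. ?c r d)"
      using False by (intro sum.cong) auto
    finally show ?thesis .
  qed (simp add: card_targets)
  let ?t = "\<lambda>d. if h = 0 \<and> d = L then 1 else a * fall_prob a m (move h d)"
  have "4 * (real n + 1) * fall_prob a (Suc m) h = 2 * ((real n + 1) * ?t L + (real n + 1) * ?t R)"
    by (simp add: fall_prob.simps(2) algebra_simps)
  also have "\<dots> \<le> 2 * ((\<Sum>r\<in>targets n. ?c r L) + (\<Sum>r\<in>targets n. ?c r R))"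
    using per_dir[of L] per_dir[of R] by (intro mult_left_mono add_mono) auto
  also have "\<dots> = (\<Sum>(r, j, d)\<in>actions n. ?c r d)"
    by (simp add: actions_def UNIV_dir UNIV_bool sum.cartesian_product[symmetric] sum.distrib sum_distrib_left)
  finally show ?thesis .
qed

text \<open>
  Once q joins the visited states, the transition at (q, t h) is never read again, so fixing
  its value leaves the rest of the computation governed by a uniformly random program.
\<close>

lemma uniform_prob_falls_off_fresh_Suc_fiber:
  assumes "q < n" "(r, j, d) \<in> actions n"
  shows "uniform_prob n (\<lambda>p. p (q, t h) = (r, j, d) \<and> falls_off_fresh p (Suc m) V (q, t, h))
    = (if h = 0 \<and> d = L then 1 else
        case r of
          None \<Rightarrow> 0
        | Some r' \<Rightarrow> if r' \<in> insert q V then 0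
                    else uniform_prob n (\<lambda>p. falls_off_fresh p m (insert q V) (r', t(h := j), move h d)))
      / (4 * (real n + 1))"
proof -
  let ?k = "(q, t h)"
  have k: "?k \<in> {0..<n} \<times> UNIV"
    using assms(1) by simp
  have fiber: "uniform_prob n (\<lambda>p. p ?k = (r, j, d) \<and> P p) = uniform_prob n P / (4 * (real n + 1))"
    if "\<And>p c. P (p(?k := c)) = P p" for P
    using k assms(2) that by (rule uniform_prob_fiber)
  let ?Q = "\<lambda>r' p. falls_off_fresh p m (insert q V) (r', t(h := j), move h d)"
  define off where "off \<longleftrightarrow> h = 0 \<and> d = L"
  have unfold: "(\<lambda>p. p ?k = (r, j, d) \<and> falls_off_fresh p (Suc m) V (q, t, h))
      = (\<lambda>p. p ?k = (r, j, d) \<and>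
          (off \<or> (case r of None \<Rightarrow> False | Some r' \<Rightarrow> r' \<notin> insert q V \<and> ?Q r' p)))"
    by (auto simp: off_def)
  consider "off" | "\<not> off" "r = None"
    | r' where "\<not> off" "r = Some r'" "r' \<in> insert q V"
    | r' where "\<not> off" "r = Some r'" "r' \<notin> insert q V"
    by (cases r) blast+
  then show ?thesis
  proof cases
    case 1
    then show ?thesis
      unfolding unfold off_def[symmetric] using fiber[of "\<lambda>_. True"] by (simp add: uniform_prob_True)
  next
    case 2
    then show ?thesis
      unfolding unfold off_def[symmetric] using fiber[of "\<lambda>_. False"] by (simp add: uniform_prob_False)
  next
    case 3
    then show ?thesis
      unfolding unfold off_def[symmetric] using fiber[of "\<lambda>_. False"] by (simp add: uniform_prob_False)
  next
    case 4
    have "?Q r' (p(?k := c)) = ?Q r' p" for p c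
      using 4 by (intro falls_off_fresh_cong) auto
    then show ?thesis
      unfolding unfold off_def[symmetric] using 4 fiber[of "?Q r'"] by simp
  qed
qed

text \<open>
  The last hypothesis guarantees that in each of the next m steps at least a (n + 1) of the
  n + 1 possible targets are states not visited yet.
\<close>

lemma fall_prob_le_uniform_prob_falls_off_fresh:
  assumes "0 \<le> a" "V \<subseteq> {0..<n}" "q < n" "q \<notin> V"
    and "a * (real n + 1) + real (card V) + real m \<le> real n"
  shows "fall_prob a m h \<le> uniform_prob n (\<lambda>p. falls_off_fresh p m V (q, t, h))"
  using assms(2-)
proof (induction m arbitrary: V q t h)
  case 0
  then show ?case
    by (simp add: uniform_prob_nonneg)
next
  case (Suc m)
  define W where "W = {0..<n} - insert q V"
  have visited: "insert q V \<subseteq> {0..<n}" "finite V"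
    using Suc.prems finite_subset by auto
  then have "card W = n - Suc (card V)" "Suc (card V) \<le> n"
    using card_mono[OF _ visited(1)] Suc.prems(3) by (simp_all add: W_def card_Diff_subset)
  then have W: "W \<subseteq> {0..<n}" "a * (real n + 1) \<le> real (card W)"
    using Suc.prems(4) by (auto simp: W_def)
  let ?c = "\<lambda>(r, j, d). if h = 0 \<and> d = L then 1 else if r \<in> Some ` W then fall_prob a m (move h d) else 0"
  let ?P = "\<lambda>p. falls_off_fresh p (Suc m) V (q, t, h)"
  have "fall_prob a (Suc m) h \<le> (\<Sum>b\<in>actions n. ?c b / (4 * (real n + 1)))"
    using fall_prob_Suc_le_sum_actions[OF assms(1) W, of m h]
    by (simp add: field_simps flip: sum_divide_distrib)
  also have "\<dots> \<le> (\<Sum>b\<in>actions n. uniform_prob n (\<lambda>p. p (q, t h) = b \<and> ?P p))"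
  proof (intro sum_mono)
    fix b assume b: "b \<in> actions n"
    obtain r j d where rjd: "b = (r, j, d)"
      by (cases b)
    have "fall_prob a m (move h d) \<le> uniform_prob n (\<lambda>p. falls_off_fresh p m (insert q V) (r', t(h := j), move h d))"
      if "r' \<in> W" for r'
      using that visited Suc.prems(3,4) by (intro Suc.IH) (auto simp: W_def)
    then have "?c b \<le> (if h = 0 \<and> d = L then 1 else
        case r of
          None \<Rightarrow> 0
        | Some r' \<Rightarrow> if r' \<in> insert q V then 0
                    else uniform_prob n (\<lambda>p. falls_off_fresh p m (insert q V) (r', t(h := j), move h d)))"
      by (auto simp: rjd W_def uniform_prob_nonneg split: option.split)
    then show "?c b / (4 * (real n + 1)) \<le> uniform_prob n (\<lambda>p. p (q, t h) = b \<and> ?P p)"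
      using b Suc.prems(2) unfolding rjd
      by (subst uniform_prob_falls_off_fresh_Suc_fiber) (auto intro: divide_right_mono)
  qed
  also have "\<dots> = uniform_prob n ?P"
    using Suc.prems(2) by (simp add: uniform_prob_sum_fibers[symmetric])
  finally show ?case .
qed

lemma fall_prob_power_le_uniform_prob_falls_off_before_halt_or_repeat:
  assumes "m < n"
  shows "((real n - real m) / (real n + 1)) ^ m * fall_prob 1 m 0
    \<le> uniform_prob n (\<lambda>p. falls_off_before_halt_or_repeat p x)"
proof -
  define a where "a = (real n - real m) / (real n + 1)"
  have a: "0 \<le> a" "a \<le> 1" "a * (real n + 1) = real n - real m"
    using assms by (simp_all add: a_def field_simps)
  have "a ^ m * fall_prob 1 m 0 \<le> fall_prob a m 0"
    using a(1,2) by (rule fall_prob_power_le)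
  also have "\<dots> \<le> uniform_prob n (\<lambda>p. falls_off_fresh p m {} (0, x, 0))"
    using assms a by (intro fall_prob_le_uniform_prob_falls_off_fresh) auto
  also have "\<dots> \<le> uniform_prob n (\<lambda>p. falls_off_before_halt_or_repeat p x)"
    by (intro uniform_prob_mono falls_off_fresh_conf_imp_falls_off_before_halt_or_repeat[of _ _ _ 0])
       (simp_all add: conf_def)
  finally show ?thesis
    by (simp add: a_def)
qed

lemma LIMSEQ_diff_divide_Suc_power: "(\<lambda>n. ((real n - real m) / (real n + 1)) ^ k) \<longlonglongrightarrow> 1"
proof -
  have "(\<lambda>n. 1 - (real m + 1) * inverse (real (Suc n))) \<longlonglongrightarrow> 1 - (real m + 1) * 0"
    by (intro tendsto_intros LIMSEQ_inverse_real_of_nat)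
  moreover have "1 - (real m + 1) * inverse (real (Suc n)) = (real n - real m) / (real n + 1)" for n
    by (simp add: field_simps)
  ultimately have "(\<lambda>n. (real n - real m) / (real n + 1)) \<longlonglongrightarrow> 1"
    by simp
  from tendsto_power[OF this, of k] show ?thesis
    by simp
qed

theorem mainTheorem6:
  fixes x :: "nat \<Rightarrow> bool"
  shows "(\<lambda>n. real (card {p \<in> programs n. falls_off_before_halt_or_repeat p x})
               / real (card (programs n))) \<longlonglongrightarrow> 1"
proof -
  let ?u = "\<lambda>n. uniform_prob n (\<lambda>p. falls_off_before_halt_or_repeat p x)"
  have "?u \<longlonglongrightarrow> 1"
  proof (rule order_tendstoI)
    fix y :: real
    assume "1 < y"
    then show "\<forall>\<^sub>F n in sequentially. ?u n < y"
      using uniform_prob_le_1 by (intro always_eventually allI) (rule le_less_trans)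
  next
    fix y :: real
    assume "y < 1"
    then obtain m where m: "y < fall_prob 1 m 0"
      using order_tendstoD(1)[OF fall_prob_1_tendsto_1] by (meson eventually_sequentially order_refl)
    have "(\<lambda>n. ((real n - real m) / (real n + 1)) ^ m * fall_prob 1 m 0) \<longlonglongrightarrow> fall_prob 1 m 0"
      using tendsto_mult_right[OF LIMSEQ_diff_divide_Suc_power, of m m] by simp
    then have "\<forall>\<^sub>F n in sequentially. y < ((real n - real m) / (real n + 1)) ^ m * fall_prob 1 m 0"
      using m by (rule order_tendstoD(1))
    moreover have "\<forall>\<^sub>F n in sequentially. m < n"
      by (rule eventually_gt_at_top)
    ultimately show "\<forall>\<^sub>F n in sequentially. y < ?u n"
      by eventually_elim
         (use fall_prob_power_le_uniform_prob_falls_off_before_halt_or_repeat in \<open>fastforce intro: less_le_trans\<close>)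
  qed
  then show ?thesis
    by (simp add: uniform_prob_def)
qed

end
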